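(* Let $\mu$ be a centered probability measure on a bounded Borel set $\Lambda\subset\mathbb{R}$ with $\Lambda$ containing more than one point (equivalently $\mu\neq\delta_0$). If $0<\beta<\beta'$, then $\gamma_\beta(s)<\gamma_{\beta'}(s)$ for all $s>0$.
   Context: Let $p\ge2$, $\xi(s)=s^p/2$, $B_t$ a standard Brownian motion, $Z(a,t)=\exp(aB_t-a^2t/2)$, and for $b\ge0$, $s\ge0$, $$\gamma_b(s)=\mathbb{E}\Big[\frac{(\int aZ(a,b\xi'(s))\mu(da))^2}{\int Z(a,b\xi'(s))\mu(da)}\Big].$$ *)

theory Defs
  imports "HOL-Probability.Probability"
begin

definition xi :: "real \<Rightarrow> real \<Rightarrow> real" where
  "xi p s = s powr p / 2"

definition xi' :: "real \<Rightarrow> real \<Rightarrow> real" where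
  "xi' p s = p * s powr (p - 1) / 2"

(* Z(a,t) evaluated at B_t = sqrt t * x, where x is a standard Gaussian sample *)
definition Zg :: "real \<Rightarrow> real \<Rightarrow> real \<Rightarrow> real" where
  "Zg a t x = exp (a * (sqrt t * x) - a\<^sup>2 * t / 2)"

(* gamma_b(s) = E[(int a Z(a,t) mu(da))^2 / int Z(a,t) mu(da)], t = b xi'(s);
   since B_t ~ sqrt t * N(0,1), the expectation is a Gaussian integral. *)
definition gamma :: "real measure \<Rightarrow> real \<Rightarrow> real \<Rightarrow> real \<Rightarrow> real" where
  "gamma \<mu> p b s =
     (let t = b * xi' p s in
      \<integral>x. ((\<integral>a. a * Zg a t x \<partial>\<mu>)\<^sup>2 / (\<integral>a. Zg a t x \<partial>\<mu>)) * std_normal_density x \<partial>lborel)"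

end

(* After the substitution x = sqrt t * y, gamma_b(s) becomes E[E[A | Y]^2] for the Gaussian
   channel Y = A + sqrt v * N, A ~ mu, with noise variance v = 1 / (b * xi'(s)).  Gaussian kernels
   form a convolution semigroup, so the channel at variance v + w is the channel at variance v
   followed by further smoothing, and Jensen's inequality for the jointly convex map
   (m, p) -> m^2 / p shows that E[E[A | Y]^2] does not increase with v.  Equality forces
   E[A | Y] to be a.e. constant, hence zero as A is centered; by exponential tilting this only
   happens when A = 0 almost surely, i.e. mu = delta_0. *)
theory Submission
  imports Defs
begin

definition gauss_kernel :: "real \<Rightarrow> real \<Rightarrow> real \<Rightarrow> real" where
  "gauss_kernel v y a = normal_density a (sqrt v) y"

lemma gauss_kernel_nonneg [simp]: "0 \<le> gauss_kernel v y a"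
  by (simp add: gauss_kernel_def)

lemma gauss_kernel_pos: "0 < v \<Longrightarrow> 0 < gauss_kernel v y a"
  by (simp add: gauss_kernel_def normal_density_pos)

lemma gauss_kernel_eq:
  "0 \<le> v \<Longrightarrow> gauss_kernel v y a = exp (- (y - a)\<^sup>2 / (2 * v)) / sqrt (2 * pi * v)"
  by (simp add: gauss_kernel_def normal_density_def)

lemma gauss_kernel_le: "0 < v \<Longrightarrow> gauss_kernel v y a \<le> 1 / sqrt (2 * pi * v)"
  by (simp add: gauss_kernel_eq divide_right_mono)

lemma measurable_gauss_kernel [measurable]:
  "f \<in> borel_measurable M \<Longrightarrow> g \<in> borel_measurable M \<Longrightarrow>
    (\<lambda>x. gauss_kernel v (f x) (g x)) \<in> borel_measurable M"
  unfolding gauss_kernel_def normal_density_def by (measurable; simp)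

lemma integrable_gauss_kernel: "0 < v \<Longrightarrow> integrable lborel (\<lambda>y. gauss_kernel v y a)"
  by (simp add: gauss_kernel_def)

lemma integral_gauss_kernel: "0 < v \<Longrightarrow> (\<integral>y. gauss_kernel v y a \<partial>lborel) = 1"
  by (simp add: gauss_kernel_def)

lemma gauss_kernel_convolution:
  assumes "0 < v" "0 < w"
  shows "(\<integral>z. gauss_kernel v z a * gauss_kernel w y z \<partial>lborel) = gauss_kernel (v + w) y a"
proof -
  have "(\<integral>\<^sup>+z. ennreal (gauss_kernel v z a * gauss_kernel w y z) \<partial>lborel)
      = (\<integral>\<^sup>+u. ennreal (gauss_kernel v (a + 1 * u) a * gauss_kernel w y (a + 1 * u)) \<partial>lborel)"
    using nn_integral_real_affine[of "\<lambda>z. ennreal (gauss_kernel v z a * gauss_kernel w y z)" 1 a]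
    by simp
  also have "\<dots> = (\<integral>\<^sup>+u. ennreal (normal_density 0 (sqrt w) ((y - a) - u) *
                                     normal_density 0 (sqrt v) u) \<partial>lborel)"
    by (intro nn_integral_cong) (simp add: gauss_kernel_def normal_density_def algebra_simps)
  also have "\<dots> = normal_density 0 (sqrt ((sqrt w)\<^sup>2 + (sqrt v)\<^sup>2)) (y - a)"
    using conv_normal_density_zero_mean[of "sqrt w" "sqrt v"] assms by (simp add: fun_eq_iff)
  also have "\<dots> = gauss_kernel (v + w) y a"
    using assms by (simp add: gauss_kernel_def normal_density_def algebra_simps)
  finally show ?thesis
    using assms by (subst integral_eq_nn_integral) (auto intro!: AE_I2)
qed

lemma gauss_kernel_tilt:
  "0 < v \<Longrightarrow> exp (z\<^sup>2 / (2 * v)) * gauss_kernel v z a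
     = exp ((2 * a * z - a\<^sup>2) / (2 * v)) / sqrt (2 * pi * v)"
  by (simp add: gauss_kernel_eq mult_exp_exp power2_eq_square field_simps)

lemma integrable_bounded_mult:
  fixes f g :: "'a \<Rightarrow> real"
  assumes "integrable M f" "g \<in> borel_measurable M" "AE x in M. \<bar>g x\<bar> \<le> C"
  shows "integrable M (\<lambda>x. g x * f x)"
proof (rule Bochner_Integration.integrable_bound)
  show "integrable M (\<lambda>x. C * \<bar>f x\<bar>)"
    using assms(1) by simp
  show "AE x in M. norm (g x * f x) \<le> norm (C * \<bar>f x\<bar>)"
    using assms(3) by eventually_elim (auto simp: abs_mult intro: mult_right_mono)
qed (use assms in simp)

lemma integrable_mult_gauss_kernel:
  fixes f :: "real \<Rightarrow> real"
  assumes "0 < w" "integrable lborel f"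
  shows "integrable lborel (\<lambda>z. f z * gauss_kernel w y z)"
  using integrable_bounded_mult[OF assms(2), of "\<lambda>z. gauss_kernel w y z" "1 / sqrt (2 * pi * w)"]
    gauss_kernel_le[OF assms(1)] by (simp add: mult.commute)

lemma integral_gauss_smoothing:
  fixes f :: "real \<Rightarrow> real"
  assumes w: "0 < w" and f: "integrable lborel f"
  shows "integrable lborel (\<lambda>y. \<integral>z. f z * gauss_kernel w y z \<partial>lborel)"
    and "(\<integral>y. (\<integral>z. f z * gauss_kernel w y z \<partial>lborel) \<partial>lborel) = (\<integral>z. f z \<partial>lborel)"
proof -
  have [measurable]: "f \<in> borel_measurable borel"
    using borel_measurable_integrable[OF f] by simp
  have int: "integrable (lborel \<Otimes>\<^sub>M lborel) (\<lambda>(z, y). f z * gauss_kernel w y z)"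
  proof (rule lborel_pair.Fubini_integrable)
    have "(\<integral>y. norm (f z * gauss_kernel w y z) \<partial>lborel) = \<bar>f z\<bar>" for z
      using integral_gauss_kernel[OF w] by (simp add: abs_mult)
    then show "integrable lborel
        (\<lambda>z. \<integral>y. norm (case (z, y) of (z, y) \<Rightarrow> f z * gauss_kernel w y z) \<partial>lborel)"
      using f by simp
    show "AE z in lborel. integrable lborel (\<lambda>y. case (z, y) of (z, y) \<Rightarrow> f z * gauss_kernel w y z)"
      using integrable_gauss_kernel[OF w] by simp
  qed measurable
  show "integrable lborel (\<lambda>y. \<integral>z. f z * gauss_kernel w y z \<partial>lborel)"
    using lborel_pair.integrable_snd[OF int] .
  show "(\<integral>y. (\<integral>z. f z * gauss_kernel w y z \<partial>lborel) \<partial>lborel) = (\<integral>z. f z \<partial>lborel)"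
    using lborel_pair.Fubini_integral[OF int] integral_gauss_kernel[OF w] by simp
qed

lemma AE_lborel_obtain_less:
  assumes "AE x in lborel. P x"
  obtains x y :: real where "x < y" "P x" "P y"
proof -
  have ne: "ae_filter lborel \<noteq> bot"
    by (simp add: ae_filter_eq_bot_iff)
  obtain x where x: "P x"
    using eventually_happens'[OF ne assms] by blast
  have "AE y in lborel. P y \<and> y \<noteq> x"
    using assms AE_lborel_singleton[of x] by eventually_elim simp
  then obtain y where "P y" "y \<noteq> x"
    using eventually_happens'[OF ne] by blast
  then show ?thesis
    using that x by (metis linorder_neq_iff)
qed

text \<open>Let \<open>A \<sim> M\<close> and \<open>Y = A + sqrt v * N\<close> with \<open>N\<close> standard Gaussian and independent of \<open>A\<close>.
  Then \<open>obs_density v\<close> is the density of \<open>Y\<close>, \<open>posterior_mean v y = E[A | Y = y]\<close>, and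
  \<open>posterior_energy v = E[E[A | Y]\<^sup>2]\<close>.\<close>
locale bounded_real_distribution = prob_space M for M :: "real measure" +
  fixes R :: real
  assumes sets_eq_borel [measurable_cong]: "sets M = sets borel"
    and AE_abs_le: "AE a in M. \<bar>a\<bar> \<le> R"
begin

definition smoothing :: "(real \<Rightarrow> real) \<Rightarrow> real \<Rightarrow> real \<Rightarrow> real" where
  "smoothing g v y = (\<integral>a. g a * gauss_kernel v y a \<partial>M)"

abbreviation obs_density :: "real \<Rightarrow> real \<Rightarrow> real" where
  "obs_density \<equiv> smoothing (\<lambda>_. 1)"

abbreviation obs_moment :: "real \<Rightarrow> real \<Rightarrow> real" where
  "obs_moment \<equiv> smoothing (\<lambda>a. a)"

definition posterior_mean :: "real \<Rightarrow> real \<Rightarrow> real" where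
  "posterior_mean v y = obs_moment v y / obs_density v y"

definition posterior_energy_density :: "real \<Rightarrow> real \<Rightarrow> real" where
  "posterior_energy_density v y = (obs_moment v y)\<^sup>2 / obs_density v y"

definition posterior_energy :: "real \<Rightarrow> real" where
  "posterior_energy v = (\<integral>y. posterior_energy_density v y \<partial>lborel)"

lemma measurable_smoothing [measurable]:
  assumes [measurable]: "g \<in> borel_measurable borel"
  shows "smoothing g v \<in> borel_measurable borel"
  unfolding smoothing_def[abs_def] by measurable

lemma integrable_smoothing_integrand:
  assumes v: "0 < v" and [measurable]: "g \<in> borel_measurable borel" and "AE a in M. \<bar>g a\<bar> \<le> B"
  shows "integrable M (\<lambda>a. g a * gauss_kernel v y a)"
proof (rule integrable_const_bound)
  show "AE a in M. norm (g a * gauss_kernel v y a) \<le> B * (1 / sqrt (2 * pi * v))"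
    using assms(3) by eventually_elim
      (use mult_mono[OF _ gauss_kernel_le[OF v]] in \<open>simp add: abs_mult\<close>)
qed measurable

lemma integral_smoothing_mult:
  assumes v: "0 < v" and [measurable]: "g \<in> borel_measurable borel"
    and g_le: "AE a in M. \<bar>g a\<bar> \<le> B"
    and [measurable]: "\<phi> \<in> borel_measurable borel" and \<phi>_le: "\<And>z. \<bar>\<phi> z\<bar> \<le> C"
  shows "integrable lborel (\<lambda>z. smoothing g v z * \<phi> z)"
    and "(\<integral>z. smoothing g v z * \<phi> z \<partial>lborel)
           = (\<integral>a. g a * (\<integral>z. gauss_kernel v z a * \<phi> z \<partial>lborel) \<partial>M)"
proof -
  interpret pair_sigma_finite M lborel ..
  define F where "F a z = g a * (gauss_kernel v z a * \<phi> z)" for a z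
  have C: "0 \<le> C"
    using \<phi>_le[of 0] by linarith
  have integrable_z: "integrable lborel (\<lambda>z. gauss_kernel v z a * \<phi> z)" for a
    using integrable_bounded_mult[OF integrable_gauss_kernel[OF v], of \<phi> C] \<phi>_le
    by (simp add: mult.commute)
  have integral_abs_le: "(\<integral>z. gauss_kernel v z a * \<bar>\<phi> z\<bar> \<partial>lborel) \<le> C" for a
  proof -
    have "(\<integral>z. gauss_kernel v z a * \<bar>\<phi> z\<bar> \<partial>lborel) \<le> (\<integral>z. C * gauss_kernel v z a \<partial>lborel)"
      using integrable_abs[OF integrable_z[of a]] integrable_gauss_kernel[OF v] \<phi>_le
      by (intro integral_mono) (auto simp: abs_mult mult.commute intro: mult_right_mono)
    then show ?thesis
      using integral_gauss_kernel[OF v] by simp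
  qed
  have "integrable M (\<lambda>a. \<integral>z. norm (F a z) \<partial>lborel)"
  proof (rule integrable_const_bound)
    show "AE a in M. norm (\<integral>z. norm (F a z) \<partial>lborel) \<le> B * C"
      using g_le
    proof eventually_elim
      case (elim a)
      have "(\<integral>z. norm (F a z) \<partial>lborel) = \<bar>g a\<bar> * (\<integral>z. gauss_kernel v z a * \<bar>\<phi> z\<bar> \<partial>lborel)"
        by (simp add: F_def abs_mult)
      also have "\<dots> \<le> B * C"
        using elim integral_abs_le[of a] C by (intro mult_mono) auto
      finally show ?case
        by (simp add: integral_nonneg_AE)
    qed
  qed (simp add: F_def[abs_def])
  then have int: "integrable (M \<Otimes>\<^sub>M lborel) (case_prod F)"
    using integrable_z by (intro Fubini_integrable) (simp_all add: F_def[abs_def])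
  have eq: "(\<lambda>z. smoothing g v z * \<phi> z) = (\<lambda>z. \<integral>a. F a z \<partial>M)"
    unfolding smoothing_def F_def integral_mult_left_zero[symmetric] mult.assoc ..
  show "integrable lborel (\<lambda>z. smoothing g v z * \<phi> z)"
    unfolding eq by (rule integrable_snd[OF int])
  have "(\<integral>z. smoothing g v z * \<phi> z \<partial>lborel) = (\<integral>a. (\<integral>z. F a z \<partial>lborel) \<partial>M)"
    unfolding eq by (rule Fubini_integral[OF int])
  then show "(\<integral>z. smoothing g v z * \<phi> z \<partial>lborel)
      = (\<integral>a. g a * (\<integral>z. gauss_kernel v z a * \<phi> z \<partial>lborel) \<partial>M)"
    by (simp add: F_def)
qed

lemma integral_smoothing:
  assumes "0 < v" "g \<in> borel_measurable borel" "AE a in M. \<bar>g a\<bar> \<le> B"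
  shows "integrable lborel (smoothing g v)" and "(\<integral>z. smoothing g v z \<partial>lborel) = (\<integral>a. g a \<partial>M)"
  using integral_smoothing_mult[OF assms, of "\<lambda>_. 1" 1] integral_gauss_kernel[OF assms(1)]
  by simp_all

lemma smoothing_convolution:
  assumes v: "0 < v" and w: "0 < w" and "g \<in> borel_measurable borel" "AE a in M. \<bar>g a\<bar> \<le> B"
  shows "integrable lborel (\<lambda>z. smoothing g v z * gauss_kernel w y z)"
    and "(\<integral>z. smoothing g v z * gauss_kernel w y z \<partial>lborel) = smoothing g (v + w) y"
  using integral_smoothing_mult[OF v assms(3,4), of "\<lambda>z. gauss_kernel w y z" "1 / sqrt (2 * pi * w)"]
    gauss_kernel_le[OF w] gauss_kernel_convolution[OF v w]
  by (simp_all add: smoothing_def)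

lemma obs_density_pos: "0 < v \<Longrightarrow> 0 < obs_density v y"
  using integral_less_AE_space[of "\<lambda>_. 0" "gauss_kernel v y"]
    integrable_smoothing_integrand[of v "\<lambda>_. 1" 1 y]
  by (simp add: smoothing_def gauss_kernel_pos emeasure_space_1)

lemma abs_obs_moment_le:
  assumes v: "0 < v" shows "\<bar>obs_moment v y\<bar> \<le> R * obs_density v y"
proof -
  have "\<bar>obs_moment v y\<bar> \<le> (\<integral>a. \<bar>a * gauss_kernel v y a\<bar> \<partial>M)"
    unfolding smoothing_def by (rule integral_abs_bound)
  also have "\<dots> \<le> (\<integral>a. R * gauss_kernel v y a \<partial>M)"
  proof (rule integral_mono_AE)
    show "integrable M (\<lambda>a. \<bar>a * gauss_kernel v y a\<bar>)"
      using integrable_smoothing_integrand[OF v, of "\<lambda>a. a" R y] AE_abs_le by simp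
    show "integrable M (\<lambda>a. R * gauss_kernel v y a)"
      using integrable_smoothing_integrand[OF v, of "\<lambda>_. 1" 1 y] by simp
    show "AE a in M. \<bar>a * gauss_kernel v y a\<bar> \<le> R * gauss_kernel v y a"
      using AE_abs_le by eventually_elim (simp add: abs_mult mult_right_mono)
  qed
  finally show ?thesis
    by (simp add: smoothing_def)
qed

lemma posterior_energy_density_nonneg: "0 < v \<Longrightarrow> 0 \<le> posterior_energy_density v y"
  using obs_density_pos[of v y] by (simp add: posterior_energy_density_def)

lemma posterior_energy_density_le:
  assumes v: "0 < v" shows "posterior_energy_density v y \<le> R\<^sup>2 * obs_density v y"
proof -
  have "(obs_moment v y)\<^sup>2 \<le> (R * obs_density v y)\<^sup>2"
    using power_mono[OF abs_obs_moment_le[OF v, of y] abs_ge_zero, of 2] by simp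
  then show ?thesis
    using obs_density_pos[OF v, of y]
    by (simp add: posterior_energy_density_def divide_le_eq power2_eq_square mult_ac)
qed

lemma integrable_posterior_energy_density:
  assumes v: "0 < v" shows "integrable lborel (posterior_energy_density v)"
proof (rule Bochner_Integration.integrable_bound)
  show "integrable lborel (\<lambda>y. R\<^sup>2 * obs_density v y)"
    using integral_smoothing(1)[OF v, of "\<lambda>_. 1" 1] by simp
  show "AE y in lborel. norm (posterior_energy_density v y) \<le> norm (R\<^sup>2 * obs_density v y)"
    using posterior_energy_density_le[OF v] posterior_energy_density_nonneg[OF v]
    by (auto intro!: AE_I2 order_trans[OF _ abs_ge_self])
qed (simp add: posterior_energy_density_def[abs_def])

definition jensen_gap :: "real \<Rightarrow> real \<Rightarrow> real \<Rightarrow> real \<Rightarrow> real" where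
  "jensen_gap v w y z =
     (obs_moment v z - posterior_mean (v + w) y * obs_density v z)\<^sup>2 / obs_density v z
       * gauss_kernel w y z"

lemma jensen_gap_nonneg: "0 < v \<Longrightarrow> 0 \<le> jensen_gap v w y z"
  by (simp add: jensen_gap_def obs_density_pos less_imp_le)

text \<open>Jensen's inequality for the convex map \<open>(m, p) \<mapsto> m\<^sup>2 / p\<close>, averaged against
  \<open>gauss_kernel w y\<close>, with its remainder made explicit.\<close>
lemma integral_jensen_gap:
  assumes v: "0 < v" and w: "0 < w"
  shows "integrable lborel (jensen_gap v w y)"
    and "(\<integral>z. jensen_gap v w y z \<partial>lborel)
           = (\<integral>z. posterior_energy_density v z * gauss_kernel w y z \<partial>lborel)
               - posterior_energy_density (v + w) y"
proof -
  let ?c = "posterior_mean (v + w) y"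
  have expand: "jensen_gap v w y z
      = posterior_energy_density v z * gauss_kernel w y z
        - 2 * ?c * (obs_moment v z * gauss_kernel w y z)
        + ?c\<^sup>2 * (obs_density v z * gauss_kernel w y z)" for z
    using obs_density_pos[OF v, of z]
    by (simp add: jensen_gap_def posterior_energy_density_def field_simps power2_eq_square)
  note energy = integrable_mult_gauss_kernel[OF w integrable_posterior_energy_density[OF v]]
  note moment = smoothing_convolution[OF v w, of "\<lambda>a. a" R y, OF _ AE_abs_le]
  note density = smoothing_convolution[OF v w, of "\<lambda>_. 1" 1 y]
  show "integrable lborel (jensen_gap v w y)"
    unfolding expand using energy moment(1) density(1) by simp
  have "(\<integral>z. jensen_gap v w y z \<partial>lborel)
      = (\<integral>z. posterior_energy_density v z * gauss_kernel w y z \<partial>lborel)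
        - 2 * ?c * obs_moment (v + w) y + ?c\<^sup>2 * obs_density (v + w) y"
    unfolding expand using energy moment density by simp
  also have "\<dots> = (\<integral>z. posterior_energy_density v z * gauss_kernel w y z \<partial>lborel)
                   - posterior_energy_density (v + w) y"
    using obs_density_pos[of "v + w" y] v w
    by (simp add: posterior_mean_def posterior_energy_density_def field_simps power2_eq_square)
  finally show "(\<integral>z. jensen_gap v w y z \<partial>lborel)
      = (\<integral>z. posterior_energy_density v z * gauss_kernel w y z \<partial>lborel)
        - posterior_energy_density (v + w) y" .
qed

lemma posterior_energy_diff:
  assumes v: "0 < v" and w: "0 < w"
  shows "integrable lborel (\<lambda>y. \<integral>z. jensen_gap v w y z \<partial>lborel)"
    and "(\<integral>y. (\<integral>z. jensen_gap v w y z \<partial>lborel) \<partial>lborel)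
           = posterior_energy v - posterior_energy (v + w)"
  using integral_gauss_smoothing[OF w integrable_posterior_energy_density[OF v]]
    integrable_posterior_energy_density[of "v + w"] v w
  by (simp_all add: integral_jensen_gap(2)[OF v w] posterior_energy_def)

text \<open>\<open>exp (z\<^sup>2 / (2 * v)) * obs_moment v z\<close> is the mean of \<open>a * exp ((2 * a * z - a\<^sup>2) / (2 * v))\<close>
  up to a positive factor, hence strictly increasing in \<open>z\<close> unless \<open>a = 0\<close> almost surely.\<close>
lemma AE_eq_0_if_obs_moment_zeros:
  assumes v: "0 < v" and "z\<^sub>1 < z\<^sub>2" and zeros: "obs_moment v z\<^sub>1 = 0" "obs_moment v z\<^sub>2 = 0"
  shows "AE a in M. a = 0"
proof -
  define E where "E z = exp (z\<^sup>2 / (2 * v))" for z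
  define h where "h a = E z\<^sub>2 * (a * gauss_kernel v z\<^sub>2 a) - E z\<^sub>1 * (a * gauss_kernel v z\<^sub>1 a)" for a
  have h_pos: "0 < h a" if "a \<noteq> 0" for a
  proof -
    define e where "e z = exp ((2 * a * z - a\<^sup>2) / (2 * v))" for z
    have "E z * gauss_kernel v z a = e z / sqrt (2 * pi * v)" for z
      using gauss_kernel_tilt[OF v] by (simp add: E_def e_def)
    then have "h a = a * (e z\<^sub>2 - e z\<^sub>1) / sqrt (2 * pi * v)"
      by (simp add: h_def mult.left_commute[of "E _"] right_diff_distrib diff_divide_distrib)
    moreover have "0 < a * (e z\<^sub>2 - e z\<^sub>1)"
    proof (cases "0 < a")
      case True
      then have "e z\<^sub>1 < e z\<^sub>2"
        using \<open>z\<^sub>1 < z\<^sub>2\<close> v by (simp add: e_def divide_strict_right_mono)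
      then show ?thesis
        using True by (intro mult_pos_pos) simp_all
    next
      case False
      then have "a < 0" "e z\<^sub>2 < e z\<^sub>1"
        using \<open>z\<^sub>1 < z\<^sub>2\<close> v that by (simp_all add: e_def divide_strict_right_mono)
      then show ?thesis
        by (intro mult_neg_neg) simp_all
    qed
    ultimately show ?thesis
      using v by simp
  qed
  have h_nonneg: "0 \<le> h a" for a
    using h_pos[of a] by (cases "a = 0") (auto simp: h_def)
  have int: "integrable M (\<lambda>a. a * gauss_kernel v z a)" for z
    using integrable_smoothing_integrand[OF v _ AE_abs_le] by simp
  then have "integrable M h"
    unfolding h_def[abs_def] by simp
  moreover have "(\<integral>a. h a \<partial>M) = 0"
    using int zeros by (simp add: h_def smoothing_def)
  ultimately have "AE a in M. h a = 0"
    using integral_nonneg_eq_0_iff_AE[of M h] h_nonneg by (simp add: AE_I2)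
  then show ?thesis
    by eventually_elim (metis h_pos less_irrefl)
qed

lemma posterior_energy_strict_antimono:
  assumes centered: "(\<integral>a. a \<partial>M) = 0" and nondegenerate: "\<not> (AE a in M. a = 0)"
    and v: "0 < v" and "v < v'"
  shows "posterior_energy v' < posterior_energy v"
proof (rule ccontr)
  define w where "w = v' - v"
  have w: "0 < w" and v': "v + w = v'"
    using \<open>v < v'\<close> by (simp_all add: w_def)
  assume "\<not> ?thesis"
  moreover have "0 \<le> (\<integral>y. (\<integral>z. jensen_gap v w y z \<partial>lborel) \<partial>lborel)"
    by (intro integral_nonneg_AE AE_I2) (simp add: integral_nonneg_AE jensen_gap_nonneg[OF v])
  ultimately have "(\<integral>y. (\<integral>z. jensen_gap v w y z \<partial>lborel) \<partial>lborel) = 0"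
    using posterior_energy_diff(2)[OF v w, unfolded v'] by linarith
  then have "AE y in lborel. (\<integral>z. jensen_gap v w y z \<partial>lborel) = 0"
    using integral_nonneg_eq_0_iff_AE[OF posterior_energy_diff(1)[OF v w]] jensen_gap_nonneg[OF v]
    by (simp add: integral_nonneg_AE)
  then obtain y where "(\<integral>z. jensen_gap v w y z \<partial>lborel) = 0"
    by (auto elim: AE_lborel_obtain_less)
  then have "AE z in lborel. jensen_gap v w y z = 0"
    using integral_nonneg_eq_0_iff_AE[OF integral_jensen_gap(1)[OF v w]] jensen_gap_nonneg[OF v]
    by simp
  then have proportional:
    "AE z in lborel. obs_moment v z = posterior_mean (v + w) y * obs_density v z"
  proof eventually_elim
    case (elim z)
    then have "(obs_moment v z - posterior_mean (v + w) y * obs_density v z)\<^sup>2 = 0"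
      using obs_density_pos[OF v, of z] gauss_kernel_pos[OF w, of y z]
      by (simp add: jensen_gap_def)
    then show ?case
      by simp
  qed
  have "(\<integral>a. a \<partial>M) = posterior_mean (v + w) y * (\<integral>a. 1 \<partial>M)"
    using integral_smoothing[OF v, of "\<lambda>a. a" R, OF _ AE_abs_le]
      integral_smoothing[OF v, of "\<lambda>_. 1" 1] integral_cong_AE[OF _ _ proportional]
    by simp
  then have "AE z in lborel. obs_moment v z = 0"
    using proportional centered by (simp add: prob_space)
  then obtain z\<^sub>1 z\<^sub>2 where "z\<^sub>1 < z\<^sub>2" "obs_moment v z\<^sub>1 = 0" "obs_moment v z\<^sub>2 = 0"
    by (rule AE_lborel_obtain_less)
  then show False
    using AE_eq_0_if_obs_moment_zeros[OF v] nondegenerate by blast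
qed

text \<open>Substituting \<open>x = sqrt t * y\<close> turns the Gaussian weight times \<open>Zg a t x\<close> into
  \<open>gauss_kernel (1 / t) y a\<close>, up to a factor depending on \<open>y\<close> only, which cancels in the ratio.\<close>
lemma gamma_eq_posterior_energy:
  assumes "0 < b * xi' p s"
  shows "gamma M p b s = posterior_energy (1 / (b * xi' p s))"
proof -
  define t where "t = b * xi' p s"
  have t: "0 < t" using assms by (simp add: t_def)
  define F where "F x = (\<integral>a. a * Zg a t x \<partial>M)\<^sup>2 / (\<integral>a. Zg a t x \<partial>M) * std_normal_density x" for x
  define \<kappa> where "\<kappa> y = sqrt t * std_normal_density (sqrt t * y)" for y
  have \<kappa>_pos: "0 < \<kappa> y" for y
    using t by (simp add: \<kappa>_def normal_density_pos)
  have kernel: "gauss_kernel (1 / t) y a = \<kappa> y * Zg a t (sqrt t * y)" for y a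
  proof -
    have "- (sqrt t * y)\<^sup>2 / 2 + (a * (sqrt t * (sqrt t * y)) - a\<^sup>2 * t / 2) = - (t * (y - a)\<^sup>2) / 2"
      using t by (simp add: power2_eq_square field_simps)
    then show ?thesis
      using t by (simp add: gauss_kernel_eq \<kappa>_def Zg_def std_normal_density_def mult_exp_exp
          real_sqrt_divide field_simps)
  qed
  have "gamma M p b s = (\<integral>x. F x \<partial>lborel)"
    by (simp add: gamma_def Let_def F_def t_def)
  also have "\<dots> = (\<integral>y. sqrt t * F (sqrt t * y) \<partial>lborel)"
    using lborel_integral_real_affine[of "sqrt t" F 0] t by simp
  also have "\<dots> = (\<integral>y. posterior_energy_density (1 / t) y \<partial>lborel)"
  proof (rule Bochner_Integration.integral_cong[OF refl])
    fix y
    have "obs_moment (1 / t) y = \<kappa> y * (\<integral>a. a * Zg a t (sqrt t * y) \<partial>M)"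
      by (simp add: smoothing_def kernel mult.left_commute[of _ "\<kappa> y"])
    moreover have "obs_density (1 / t) y = \<kappa> y * (\<integral>a. Zg a t (sqrt t * y) \<partial>M)"
      by (simp add: smoothing_def kernel)
    ultimately show "sqrt t * F (sqrt t * y) = posterior_energy_density (1 / t) y"
      using \<kappa>_pos[of y] by (simp add: posterior_energy_density_def F_def \<kappa>_def power2_eq_square)
  qed
  finally show ?thesis
    by (simp add: posterior_energy_def t_def)
qed

end

theorem lemma5:
  fixes \<mu> :: "real measure" and \<Lambda> :: "real set" and p \<beta> \<beta>' s :: real
  assumes "p \<ge> 2"
    and "prob_space \<mu>" and "sets \<mu> = sets borel"
    and "\<Lambda> \<in> sets borel" and "bounded \<Lambda>" and "emeasure \<mu> \<Lambda> = 1"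
    and "(\<integral>a. a \<partial>\<mu>) = 0"
    and "\<mu> \<noteq> return borel 0"
    and "0 < \<beta>" and "\<beta> < \<beta>'" and "0 < s"
  shows "gamma \<mu> p \<beta> s < gamma \<mu> p \<beta>' s"
proof -
  interpret prob_space \<mu> by fact
  obtain R where R: "\<forall>a\<in>\<Lambda>. \<bar>a\<bar> \<le> R"
    using \<open>bounded \<Lambda>\<close> unfolding bounded_real by blast
  have "AE a in \<mu>. a \<in> \<Lambda>"
    using assms(3,4,6) by (intro AE_prob_1) (simp_all add: emeasure_eq_measure)
  then have "AE a in \<mu>. \<bar>a\<bar> \<le> R"
    by eventually_elim (use R in blast)
  then interpret bounded_real_distribution \<mu> R
    using assms(3) by unfold_locales
  have nondegenerate: "\<not> (AE a in \<mu>. a = 0)"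
    using AE_eq_constD(1) return_cong[OF assms(3)] \<open>\<mu> \<noteq> return borel 0\<close> by metis
  have "0 < xi' p s"
    using \<open>p \<ge> 2\<close> \<open>0 < s\<close> by (simp add: xi'_def)
  then have "0 < \<beta> * xi' p s" "\<beta> * xi' p s < \<beta>' * xi' p s"
    using \<open>0 < \<beta>\<close> \<open>\<beta> < \<beta>'\<close> by simp_all
  then have "posterior_energy (1 / (\<beta> * xi' p s)) < posterior_energy (1 / (\<beta>' * xi' p s))"
    by (intro posterior_energy_strict_antimono assms(7) nondegenerate) (simp_all add: frac_less2)
  then show ?thesis
    using \<open>0 < \<beta> * xi' p s\<close> \<open>\<beta> * xi' p s < \<beta>' * xi' p s\<close>
    by (simp add: gamma_eq_posterior_energy)
qed

end
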